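(* Let $\tilde\varepsilon_0:\mathbb R\to\mathbb R$ be any function supported in $[\frac43\delta^{\frac1{2i_1}},\frac53\delta^{\frac1{2i_1}}]$, and let $u_0(x)=\sum_{l=1}^L\delta^{\frac1{2i_l}}\Psi_{i_l}\big((x-y_{l,0})\delta^{-\alpha_l}\big)+\tilde\varepsilon_0(x)$. Then $h_l=u_0(y_{l,0})-u_0(0)$ for every $l$, and: $h_l<0$ for $2\le l\le L$; $h_{l+1}<h_l$ for $2\le l\le L-1$; and there is a constant $C$ independent of $\delta$ such that for all sufficiently small $\delta>0$ and all $2\le l\le L$, $$|h_l|\le C\,\delta^{\frac{1}{2i_m(2i_m+1)}}.$$
   Context: For a positive integer $i$, $\Psi_i:\mathbb R\to\mathbb R$ denotes the odd, strictly decreasing, analytic solution of $-\frac{1}{2i}\Psi_i+\frac{2i+1}{2i}X\Psi_i'(X)+\Psi_i(X)\Psi_i'(X)=0$ satisfying $\Psi_i(X)=-X+X^{2i+1}+O(X^{4i+1})$ as $X\to0$. It satisfies $\Psi_i(X)=-\operatorname{sgn}(X)|X|^{\frac1{2i+1}}+\operatorname{sgn}(X)\frac{|X|^{-1+\frac{2}{2i+1}}}{2i+1}+O(|X|^{-2+\frac{3}{2i+1}})$ as $|X|\to\infty$, and $|\Psi_i(X)|\approx |X|(1+|X|)^{\frac1{2i+1}-1}$ for all $X$. Fix an integer $L\ge2$ and positive integers $i_1,\dots,i_L$; let $i_m=\max_l i_l$ and $\alpha_l=1+\frac1{2i_l}$. Let $\delta\in(0,1)$. For $l=1,\dots,L$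 put $y_{l,0}=3(l-1)\delta^{1/(2i_1)}$ and $h_l=\sum_{l'=1}^L\delta^{\frac1{2i_{l'}}}\Big(\Psi_{i_{l'}}\big(\tfrac{y_{l,0}-y_{l',0}}{\delta^{\alpha_{l'}}}\big)-\Psi_{i_{l'}}\big(\tfrac{-y_{l',0}}{\delta^{\alpha_{l'}}}\big)\Big)$. Here $A\approx B$ means $C^{-1}B\le A\le CB$ with $C$ independent of $X$. *)

theory Defs
  imports "HOL-Analysis.Analysis" "HOL-Library.Landau_Symbols"
begin

definition real_analytic :: "(real \<Rightarrow> real) \<Rightarrow> bool" where
  "real_analytic f \<longleftrightarrow>
     (\<forall>x. \<exists>r>0. \<exists>c::nat \<Rightarrow> real. \<forall>y. \<bar>y - x\<bar> < r \<longrightarrow> (\<lambda>n. c n * (y - x) ^ n) sums f y)"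

text \<open>The profile \<open>\<Psi>_k\<close>: the odd, strictly decreasing, analytic solution of
  \<open>-1/(2k) \<Psi> + (2k+1)/(2k) X \<Psi>' + \<Psi> \<Psi>' = 0\<close> with \<open>\<Psi>(X) = -X + X^(2k+1) + O(X^(4k+1))\<close>
  at 0, together with the properties of it recorded in the paper (behaviour at infinity and
  the global two-sided size bound).\<close>
definition is_Psi :: "nat \<Rightarrow> (real \<Rightarrow> real) \<Rightarrow> bool" where
  "is_Psi k f \<longleftrightarrow>
     (\<forall>X. f (- X) = - f X) \<and>
     (\<forall>X Y. X < Y \<longrightarrow> f Y < f X) \<and>
     real_analytic f \<and>
     (\<forall>X. f differentiable (at X)) \<and>
     (\<forall>X. - (1 / (2 * real k)) * f X + (2 * real k + 1) / (2 * real k) * X * deriv f X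
            + f X * deriv f X = 0) \<and>
     (\<lambda>X. f X - (- X + X ^ (2 * k + 1))) \<in> O[at (0::real)](\<lambda>X. X ^ (4 * k + 1)) \<and>
     (\<lambda>X. f X - (- sgn X * \<bar>X\<bar> powr (1 / (2 * real k + 1))
                  + sgn X * \<bar>X\<bar> powr (-1 + 2 / (2 * real k + 1)) / (2 * real k + 1)))
       \<in> O[at_infinity](\<lambda>X. \<bar>X\<bar> powr (-2 + 3 / (2 * real k + 1))) \<and>
     (\<exists>C>0. \<forall>X. (1 / C) * (\<bar>X\<bar> * (1 + \<bar>X\<bar>) powr (1 / (2 * real k + 1) - 1)) \<le> \<bar>f X\<bar> \<and>
                 \<bar>f X\<bar> \<le> C * (\<bar>X\<bar> * (1 + \<bar>X\<bar>) powr (1 / (2 * real k + 1) - 1)))"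

definition alpha :: "(nat \<Rightarrow> nat) \<Rightarrow> nat \<Rightarrow> real" where
  "alpha i l = 1 + 1 / (2 * real (i l))"

definition ypos :: "(nat \<Rightarrow> nat) \<Rightarrow> real \<Rightarrow> nat \<Rightarrow> real" where
  "ypos i \<delta> l = 3 * (real l - 1) * \<delta> powr (1 / (2 * real (i 1)))"

definition hval :: "(nat \<Rightarrow> real \<Rightarrow> real) \<Rightarrow> (nat \<Rightarrow> nat) \<Rightarrow> nat \<Rightarrow> real \<Rightarrow> nat \<Rightarrow> real" where
  "hval Psi i L \<delta> l =
     (\<Sum>l'=1..L. \<delta> powr (1 / (2 * real (i l'))) *
        (Psi (i l') ((ypos i \<delta> l - ypos i \<delta> l') / \<delta> powr (alpha i l'))
         - Psi (i l') (- ypos i \<delta> l' / \<delta> powr (alpha i l'))))"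

definition u0 :: "(nat \<Rightarrow> real \<Rightarrow> real) \<Rightarrow> (nat \<Rightarrow> nat) \<Rightarrow> nat \<Rightarrow> real \<Rightarrow> (real \<Rightarrow> real) \<Rightarrow> real \<Rightarrow> real" where
  "u0 Psi i L \<delta> eps x =
     (\<Sum>l=1..L. \<delta> powr (1 / (2 * real (i l))) *
        Psi (i l) ((x - ypos i \<delta> l) * \<delta> powr (- alpha i l))) + eps x"

end

theory Submission
  imports Defs
begin

text \<open>The points \<open>y\<^sub>l\<close> all lie in \<open>3 \<delta>^(1/(2i\<^sub>1)) \<int>\<close>, hence outside the support of the
  perturbation, which therefore cancels in \<open>u\<^sub>0(y\<^sub>l) - u\<^sub>0(0)\<close>. Each \<open>h\<^sub>l\<close> is a sum of
  increments of strictly decreasing profiles between rescalings of \<open>-y\<^sub>l\<^sub>'\<close> and \<open>y\<^sub>l - y\<^sub>l\<^sub>'\<close>,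
  and \<open>h\<^sub>1 = 0\<close>, so \<open>h\<^sub>l\<close> is strictly decreasing in \<open>l\<close>; this gives both the sign and the
  ordering. For the size, the growth bound \<open>|\<Psi>\<^sub>k(X)| \<lesssim> |X|^(1/(2k+1))\<close>, applied at
  \<open>X \<approx> \<delta>^(1/(2j) - 1 - 1/(2k))\<close> with \<open>k = i\<^sub>l\<^sub>'\<close> and \<open>j = i\<^sub>1\<close>, makes the summand of index
  \<open>l'\<close> of size \<open>\<delta>^(1/(2j(2k+1)))\<close>, which is at most \<open>\<delta>^(1/(2i\<^sub>m(2i\<^sub>m+1)))\<close> when \<open>\<delta> < 1\<close>.\<close>

lemma is_Psi_strict_antimono:
  assumes "is_Psi k f"
  shows "strict_antimono_on UNIV f"
  using assms by (intro monotone_onI) (auto simp: is_Psi_def)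

lemma is_Psi_powr_bound:
  assumes "is_Psi k f"
  shows "\<exists>C>0. \<forall>X. \<bar>f X\<bar> \<le> C * \<bar>X\<bar> powr (1 / (2 * real k + 1))"
proof -
  let ?p = "1 / (2 * real k + 1)"
  from assms obtain C where C: "C > 0" "\<And>X. \<bar>f X\<bar> \<le> C * (\<bar>X\<bar> * (1 + \<bar>X\<bar>) powr (?p - 1))"
    unfolding is_Psi_def by blast
  have "\<bar>X\<bar> * (1 + \<bar>X\<bar>) powr (?p - 1) \<le> \<bar>X\<bar> powr ?p" for X
  proof (cases "X = 0")
    case False
    then have "\<bar>X\<bar> * (1 + \<bar>X\<bar>) powr (?p - 1) \<le> \<bar>X\<bar> * \<bar>X\<bar> powr (?p - 1)"
      by (intro mult_left_mono powr_mono2') (auto simp: field_simps)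
    also have "\<dots> = \<bar>X\<bar> powr ?p"
      using False by (simp add: powr_diff)
    finally show ?thesis .
  qed simp
  then have "\<bar>f X\<bar> \<le> C * \<bar>X\<bar> powr ?p" for X
    using C by (meson mult_left_mono order_trans less_imp_le)
  then show ?thesis using C(1) by blast
qed

lemma powr_growth_bound_rescaled:
  fixes f :: "real \<Rightarrow> real" and j k m :: nat
  assumes f: "\<And>X. \<bar>f X\<bar> \<le> C * \<bar>X\<bar> powr (1 / (2 * real k + 1))"
    and \<delta>: "0 < \<delta>" "\<delta> < 1" and c: "\<bar>c\<bar> \<le> M" "1 \<le> M"
    and jk: "0 < j" "j \<le> m" "0 < k" "k \<le> m"
  shows "\<delta> powr (1 / (2 * real k)) *
           \<bar>f (c * \<delta> powr (1 / (2 * real j)) / \<delta> powr (1 + 1 / (2 * real k)))\<bar>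
         \<le> C * M * \<delta> powr (1 / (2 * real m * (2 * real m + 1)))"
proof -
  define p where "p = 1 / (2 * real k + 1)"
  define Q where "Q = \<delta> powr (1 / (2 * real j)) / \<delta> powr (1 + 1 / (2 * real k))"
  have p: "0 < p" "p \<le> 1" using jk by (auto simp: p_def field_simps)
  have p_mult: "p * (1 + 1 / (2 * real k)) = 1 / (2 * real k)"
    using jk by (simp add: p_def field_simps)
  have "C \<ge> 0" using f[of 1] by (simp add: order_trans[OF abs_ge_zero])
  have Q: "Q > 0" using \<delta> by (simp add: Q_def)
  have "\<bar>c * Q\<bar> powr p \<le> (M * Q) powr p"
    using c Q p by (intro powr_mono2) (auto simp: abs_mult mult_right_mono)
  also have "\<dots> = M powr p * Q powr p" using c Q by (simp add: powr_mult)
  also have "\<dots> \<le> M * Q powr p"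
    using c p powr_mono[of p 1 M] by (intro mult_right_mono) auto
  finally have "C * \<bar>c * Q\<bar> powr p \<le> C * (M * Q powr p)"
    using \<open>C \<ge> 0\<close> by (rule mult_left_mono)
  then have f_cQ: "\<bar>f (c * Q)\<bar> \<le> C * M * Q powr p"
    using f[of "c * Q", folded p_def] by (simp add: mult.assoc)
  have "\<delta> powr (1 / (2 * real k)) * Q powr p = \<delta> powr (1 / (2 * real j * (2 * real k + 1)))"
  proof -
    have "Q = \<delta> powr (1 / (2 * real j) - (1 + 1 / (2 * real k)))"
      using \<delta> by (simp add: Q_def powr_diff)
    then have "\<delta> powr (1 / (2 * real k)) * Q powr p
        = \<delta> powr (1 / (2 * real k) + p * (1 / (2 * real j) - (1 + 1 / (2 * real k))))"
      by (simp add: powr_powr powr_add mult.commute)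
    also have "1 / (2 * real k) + p * (1 / (2 * real j) - (1 + 1 / (2 * real k))) = p / (2 * real j)"
      using p_mult by (simp add: right_diff_distrib)
    also have "p / (2 * real j) = 1 / (2 * real j * (2 * real k + 1))"
      by (simp add: p_def)
    finally show ?thesis .
  qed
  then have "\<delta> powr (1 / (2 * real k)) * \<bar>f (c * Q)\<bar>
      \<le> C * M * \<delta> powr (1 / (2 * real j * (2 * real k + 1)))"
    using mult_left_mono[OF f_cQ, of "\<delta> powr (1 / (2 * real k))"] by (simp add: ac_simps)
  also have "\<dots> \<le> C * M * \<delta> powr (1 / (2 * real m * (2 * real m + 1)))"
    using \<delta> jk \<open>C \<ge> 0\<close> c by (intro mult_left_mono powr_mono' divide_left_mono mult_mono) auto
  finally show ?thesis by (simp add: Q_def)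
qed

lemma ypos_strict_mono:
  assumes "0 < \<delta>" "l < l'"
  shows "ypos i \<delta> l < ypos i \<delta> l'"
  using assms by (simp add: ypos_def)

lemma ypos_1: "ypos i \<delta> 1 = 0"
  by (simp add: ypos_def)

lemma ypos_not_in_support:
  assumes "0 < \<delta>"
  shows "ypos i \<delta> l \<notin> {4/3 * \<delta> powr (1 / (2 * real (i 1))) .. 5/3 * \<delta> powr (1 / (2 * real (i 1)))}"
proof -
  define D where "D = \<delta> powr (1 / (2 * real (i 1)))"
  have "D > 0" using assms by (simp add: D_def)
  moreover have "ypos i \<delta> l = 3 * (real l - 1) * D" by (simp add: ypos_def D_def)
  moreover have "real l - 1 \<le> 0 \<or> 1 \<le> real l - 1" by (cases "l = 0") auto
  ultimately show ?thesis
    unfolding D_def[symmetric] by (auto simp: mult_le_0_iff mult_right_mono)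
qed

lemma hval_eq_u0_diff:
  assumes "eps (ypos i \<delta> l) = eps 0"
  shows "hval Psi i L \<delta> l = u0 Psi i L \<delta> eps (ypos i \<delta> l) - u0 Psi i L \<delta> eps 0"
proof -
  have "x * \<delta> powr (- alpha i l') = x / \<delta> powr (alpha i l')" for x l'
    by (simp add: powr_minus_divide)
  then show ?thesis
    unfolding hval_def u0_def using assms
    by (simp add: sum_subtractf[symmetric] right_diff_distrib)
qed

lemma hval_eq_u0_diff_of_support:
  assumes "0 < \<delta>"
    and "\<forall>x. x \<notin> {4/3 * \<delta> powr (1 / (2 * real (i 1))) .. 5/3 * \<delta> powr (1 / (2 * real (i 1)))}
           \<longrightarrow> eps x = 0"
  shows "hval Psi i L \<delta> l = u0 Psi i L \<delta> eps (ypos i \<delta> l) - u0 Psi i L \<delta> eps 0"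
proof (rule hval_eq_u0_diff)
  have "eps (ypos i \<delta> l') = 0" for l'
    using assms ypos_not_in_support by blast
  from this[of l] this[of 1] show "eps (ypos i \<delta> l) = eps 0"
    by (metis ypos_1)
qed

lemma hval_1: "hval Psi i L \<delta> 1 = 0"
  by (simp add: hval_def ypos_def)

lemma hval_strict_antimono:
  assumes dec: "\<And>l'. l' \<in> {1..L} \<Longrightarrow> strict_antimono_on UNIV (Psi (i l'))"
    and "1 \<le> L" "0 < \<delta>" "l1 < l2"
  shows "hval Psi i L \<delta> l2 < hval Psi i L \<delta> l1"
  unfolding hval_def
proof (rule sum_strict_mono)
  fix l' assume l': "l' \<in> {1..L}"
  have "(ypos i \<delta> l1 - ypos i \<delta> l') / \<delta> powr (alpha i l')
      < (ypos i \<delta> l2 - ypos i \<delta> l') / \<delta> powr (alpha i l')"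
    using assms ypos_strict_mono by (intro divide_strict_right_mono) auto
  then have "Psi (i l') ((ypos i \<delta> l2 - ypos i \<delta> l') / \<delta> powr (alpha i l'))
      < Psi (i l') ((ypos i \<delta> l1 - ypos i \<delta> l') / \<delta> powr (alpha i l'))"
    using monotone_onD[OF dec[OF l'] UNIV_I UNIV_I] by blast
  then show "\<delta> powr (1 / (2 * real (i l'))) *
      (Psi (i l') ((ypos i \<delta> l2 - ypos i \<delta> l') / \<delta> powr (alpha i l'))
       - Psi (i l') (- ypos i \<delta> l' / \<delta> powr (alpha i l')))
    < \<delta> powr (1 / (2 * real (i l'))) *
      (Psi (i l') ((ypos i \<delta> l1 - ypos i \<delta> l') / \<delta> powr (alpha i l'))
       - Psi (i l') (- ypos i \<delta> l' / \<delta> powr (alpha i l')))"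
    using assms(3) by (intro mult_strict_left_mono) auto
qed (use assms in auto)

lemma hval_neg:
  assumes "\<And>l'. l' \<in> {1..L} \<Longrightarrow> strict_antimono_on UNIV (Psi (i l'))"
    and "1 \<le> L" "0 < \<delta>" "2 \<le> l"
  shows "hval Psi i L \<delta> l < 0"
proof -
  have "hval Psi i L \<delta> l < hval Psi i L \<delta> 1"
    using assms by (intro hval_strict_antimono) auto
  then show ?thesis by (simp only: hval_1)
qed

lemma hval_abs_bound:
  fixes C :: "nat \<Rightarrow> real"
  assumes growth: "\<And>l'. l' \<in> {1..L} \<Longrightarrow>
      \<forall>X. \<bar>Psi (i l') X\<bar> \<le> C (i l') * \<bar>X\<bar> powr (1 / (2 * real (i l') + 1))"
    and pos: "\<And>l'. l' \<in> {1..L} \<Longrightarrow> 0 < i l' \<and> i l' \<le> m"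
    and \<delta>: "0 < \<delta>" "\<delta> < 1" and l: "l \<in> {1..L}"
  shows "\<bar>hval Psi i L \<delta> l\<bar>
    \<le> (\<Sum>l'=1..L. 2 * C (i l') * (3 * real L)) * \<delta> powr (1 / (2 * real m * (2 * real m + 1)))"
proof -
  let ?e = "\<delta> powr (1 / (2 * real m * (2 * real m + 1)))"
  let ?D = "\<delta> powr (1 / (2 * real (i 1)))"
  have summand_bound: "\<bar>\<delta> powr (1 / (2 * real (i l'))) *
        (Psi (i l') ((ypos i \<delta> l - ypos i \<delta> l') / \<delta> powr (alpha i l'))
         - Psi (i l') (- ypos i \<delta> l' / \<delta> powr (alpha i l')))\<bar>
      \<le> 2 * C (i l') * (3 * real L) * ?e" if l': "l' \<in> {1..L}" for l'
  proof -
    let ?w = "\<delta> powr (1 / (2 * real (i l')))"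
    let ?\<Psi> = "\<lambda>c. Psi (i l') (c * ?D / \<delta> powr (alpha i l'))"
    have bound: "?w * \<bar>?\<Psi> c\<bar> \<le> C (i l') * (3 * real L) * ?e" if "\<bar>c\<bar> \<le> 3 * real L" for c
      unfolding alpha_def
      by (rule powr_growth_bound_rescaled)
        (use growth[OF l'] pos[OF l'] pos[of 1] l l' that \<delta> in auto)
    have small: "\<bar>3 * (real l - real l')\<bar> \<le> 3 * real L" "\<bar>- 3 * (real l' - 1)\<bar> \<le> 3 * real L"
      using l l' by auto
    have "ypos i \<delta> l - ypos i \<delta> l' = 3 * (real l - real l') * ?D"
      "- ypos i \<delta> l' = - 3 * (real l' - 1) * ?D"
      by (simp_all add: ypos_def algebra_simps)
    note eqs = this
    have "\<bar>?w * (Psi (i l') ((ypos i \<delta> l - ypos i \<delta> l') / \<delta> powr (alpha i l'))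
         - Psi (i l') (- ypos i \<delta> l' / \<delta> powr (alpha i l')))\<bar>
      = ?w * \<bar>?\<Psi> (3 * (real l - real l')) - ?\<Psi> (- 3 * (real l' - 1))\<bar>"
      using eqs by (simp add: abs_mult)
    also have "\<dots> \<le> ?w * \<bar>?\<Psi> (3 * (real l - real l'))\<bar> + ?w * \<bar>?\<Psi> (- 3 * (real l' - 1))\<bar>"
      by (rule order_trans[OF mult_left_mono[OF abs_triangle_ineq4]]) (simp_all add: distrib_left)
    also have "\<dots> \<le> 2 * C (i l') * (3 * real L) * ?e"
      using bound[OF small(1)] bound[OF small(2)] by linarith
    finally show ?thesis .
  qed
  have "\<bar>hval Psi i L \<delta> l\<bar> \<le> (\<Sum>l'=1..L. \<bar>\<delta> powr (1 / (2 * real (i l'))) *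
        (Psi (i l') ((ypos i \<delta> l - ypos i \<delta> l') / \<delta> powr (alpha i l'))
         - Psi (i l') (- ypos i \<delta> l' / \<delta> powr (alpha i l')))\<bar>)"
    unfolding hval_def by (rule sum_abs)
  also have "\<dots> \<le> (\<Sum>l'=1..L. 2 * C (i l') * (3 * real L) * ?e)"
    by (rule sum_mono) (rule summand_bound)
  finally show ?thesis by (simp add: sum_distrib_right)
qed

lemma hval_eventually_bounded:
  assumes "\<And>k. 0 < k \<Longrightarrow> is_Psi k (Psi k)" and "\<And>l. l \<in> {1..L} \<Longrightarrow> 0 < i l"
  shows "\<exists>K. \<forall>\<^sub>F \<delta> in at_right 0. \<forall>l\<in>{1..L}. \<bar>hval Psi i L \<delta> l\<bar>
      \<le> K * \<delta> powr (1 / (2 * real (Max (i ` {1..L})) * (2 * real (Max (i ` {1..L})) + 1)))"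
proof -
  have "\<forall>k. \<exists>C. 0 < k \<longrightarrow> (\<forall>X. \<bar>Psi k X\<bar> \<le> C * \<bar>X\<bar> powr (1 / (2 * real k + 1)))"
    using assms(1) is_Psi_powr_bound by blast
  then obtain C where C: "\<And>k. 0 < k \<Longrightarrow> \<forall>X. \<bar>Psi k X\<bar> \<le> C k * \<bar>X\<bar> powr (1 / (2 * real k + 1))"
    by metis
  have i_range: "0 < i l' \<and> i l' \<le> Max (i ` {1..L})" if "l' \<in> {1..L}" for l'
    using assms(2)[OF that] that by simp
  have "\<forall>\<^sub>F \<delta> in at_right 0. 0 < \<delta> \<and> \<delta> < (1::real)"
    by (intro eventually_at_rightI[of 0 1]) auto
  then have "\<forall>\<^sub>F \<delta> in at_right 0. \<forall>l\<in>{1..L}. \<bar>hval Psi i L \<delta> l\<bar>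
      \<le> (\<Sum>l'=1..L. 2 * C (i l') * (3 * real L))
        * \<delta> powr (1 / (2 * real (Max (i ` {1..L})) * (2 * real (Max (i ` {1..L})) + 1)))"
    by (rule eventually_mono) (use C assms(2) i_range in \<open>blast intro: hval_abs_bound\<close>)
  then show ?thesis by blast
qed

theorem lemma2p1:
  fixes Psi :: "nat \<Rightarrow> real \<Rightarrow> real" and i :: "nat \<Rightarrow> nat" and L :: nat
  assumes hPsi: "\<And>k. 0 < k \<Longrightarrow> is_Psi k (Psi k)"
    and hL: "2 \<le> L"
    and hi: "\<And>l. l \<in> {1..L} \<Longrightarrow> 0 < i l"
  shows "(\<forall>\<delta> eps. 0 < \<delta> \<and> \<delta> < 1 \<and>
            (\<forall>x. x \<notin> {4/3 * \<delta> powr (1 / (2 * real (i 1))) .. 5/3 * \<delta> powr (1 / (2 * real (i 1)))}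
                 \<longrightarrow> eps x = 0) \<longrightarrow>
            (\<forall>l\<in>{1..L}. hval Psi i L \<delta> l = u0 Psi i L \<delta> eps (ypos i \<delta> l) - u0 Psi i L \<delta> eps 0) \<and>
            (\<forall>l\<in>{2..L}. hval Psi i L \<delta> l < 0) \<and>
            (\<forall>l\<in>{2..L-1}. hval Psi i L \<delta> (l + 1) < hval Psi i L \<delta> l))
       \<and> (\<exists>C. \<forall>\<^sub>F \<delta> in at_right 0. \<forall>l\<in>{2..L}.
            \<bar>hval Psi i L \<delta> l\<bar>
              \<le> C * \<delta> powr (1 / (2 * real (Max (i ` {1..L})) * (2 * real (Max (i ` {1..L})) + 1))))"
proof -
  have dec: "strict_antimono_on UNIV (Psi (i l'))" if "l' \<in> {1..L}" for l'
    using hPsi[OF hi[OF that]] by (rule is_Psi_strict_antimono)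
  obtain K where "\<forall>\<^sub>F \<delta> in at_right 0. \<forall>l\<in>{1..L}. \<bar>hval Psi i L \<delta> l\<bar>
      \<le> K * \<delta> powr (1 / (2 * real (Max (i ` {1..L})) * (2 * real (Max (i ` {1..L})) + 1)))"
    using hval_eventually_bounded[where Psi = Psi and i = i and L = L, OF hPsi hi] by blast
  then have "\<forall>\<^sub>F \<delta> in at_right 0. \<forall>l\<in>{2..L}. \<bar>hval Psi i L \<delta> l\<bar>
      \<le> K * \<delta> powr (1 / (2 * real (Max (i ` {1..L})) * (2 * real (Max (i ` {1..L})) + 1)))"
    by (rule eventually_mono) auto
  moreover have "hval Psi i L \<delta> l < 0" if "0 < \<delta>" "l \<in> {2..L}" for \<delta> l
    using dec hL that by (intro hval_neg) auto
  moreover have "hval Psi i L \<delta> (l + 1) < hval Psi i L \<delta> l" if "0 < \<delta>" for \<delta> l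
    using dec hL that by (intro hval_strict_antimono) auto
  ultimately show ?thesis
    using hval_eq_u0_diff_of_support by blast
qed

end
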